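(* Let $\mathcal{F}$ be an argumentation framework and $S\subseteq A_{\mathcal{F}}$. Then $S\in\mathit{tfcf2}(\mathcal{F})$ if and only if $S$ is conflict-free and $S$ is a naive extension of $[[\mathcal{F}\setminus\Delta_{\mathcal{F},S}]]$.
   Context: An argumentation framework (AF) is $\mathcal{F}=(A_{\mathcal{F}},R_{\mathcal{F}})$ with $R_{\mathcal{F}}\subseteq A_{\mathcal{F}}\times A_{\mathcal{F}}$; $a\rightarrow b$ means $(a,b)\in R_{\mathcal{F}}$. $\mathcal{F}|_B=(A_{\mathcal{F}}\cap B,R_{\mathcal{F}}\cap(B\times B))$. Conflict-free: no $a,b\in S$ with $a\rightarrow b$; naive extension: $\subseteq$-maximal conflict-free set. $\mathrm{SCC}(a)$: set of $b$ with directed attack paths (possibly length 0) from $a$ to $b$ and back. $D_S(X)=\{b\in X:\exists a\in S\setminus X,\ a\rightarrow b\}$. $\mathit{tfcf2}$: $C^0_S(a)=\mathrm{SCC}(a)$; $C^{\alpha+1}_S(a)$ = the strongly connected component of $a$ in $\mathcal{F}|_{C^\alpha_S(a)\setminus D_S(C^\alpha_S(a))}$ (empty if $a$ is not in that set); for limit $\lambda$, $C^\lambda_S(a)$ = the component of $a$ in $\mathcal{F}|_{\bigcap_{\alpha<\lambda}C^\alpha_S(a)}$; $\alpha_S(a)$ = least $\alpha$ with $a\notin C^\alpha_S(a)$ or $C^{\alpha+1}_S(a)=C^\alpha_S(a)$. $S\in\mathit{tfcf2}(\mathcal{F})$ iff $S$ is conflict-free and for each $a\in A_{\mathcal{F}}$,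 either $a\notin C^{\alpha_S(a)}_S(a)$ or $S\cap C^{\alpha_S(a)}_S(a)$ is a naive extension of $\mathcal{F}|_{C^{\alpha_S(a)}_S(a)}$. $b$ is reachable from $a$ modulo $B$, written $a\Rightarrow^B_{\mathcal{F}}b$, if there is a directed attack path from $a$ to $b$ in $\mathcal{F}|_B$. For $D\subseteq A_{\mathcal{F}}$, $\Delta_{\mathcal{F},S}(D)=\{a\in A_{\mathcal{F}}:\exists b\in S\,(b\rightarrow a\text{ and not }a\Rightarrow^{A_{\mathcal{F}}\setminus D}_{\mathcal{F}}b)\}$. This operator on subsets of $A_{\mathcal{F}}$ is monotone; $\Delta_{\mathcal{F},S}$ (as a set) denotes its least fixed point. $\mathcal{F}\setminus\Delta$ denotes $\mathcal{F}|_{A_{\mathcal{F}}\setminus\Delta}$. For an AF $\mathcal{G}$, the separation $[[\mathcal{G}]]$ is obtained from $\mathcal{G}$ by deleting all attacks between arguments lying in different strongly connected components of $\mathcal{G}$. *)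

theory Defs
  imports Main
begin

type_synonym 'a AF = "'a set \<times> ('a \<times> 'a) set"

definition args :: "'a AF \<Rightarrow> 'a set" where "args F = fst F"
definition att :: "'a AF \<Rightarrow> ('a \<times> 'a) set" where "att F = snd F"

definition wf_AF :: "'a AF \<Rightarrow> bool" where
  "wf_AF F \<longleftrightarrow> att F \<subseteq> args F \<times> args F"

definition restrict_AF :: "'a AF \<Rightarrow> 'a set \<Rightarrow> 'a AF" where
  "restrict_AF F B = (args F \<inter> B, att F \<inter> (B \<times> B))"

definition conflict_free :: "'a AF \<Rightarrow> 'a set \<Rightarrow> bool" where
  "conflict_free F S \<longleftrightarrow> S \<subseteq> args F \<and> (\<forall>a\<in>S. \<forall>b\<in>S. (a, b) \<notin> att F)"

definition naive :: "'a AF \<Rightarrow> 'a set \<Rightarrow> bool" where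
  "naive F S \<longleftrightarrow> conflict_free F S \<and> (\<forall>T. conflict_free F T \<and> S \<subseteq> T \<longrightarrow> T = S)"

text \<open>Strongly connected component of a in F (empty if a is not an argument of F).\<close>
definition SCC :: "'a AF \<Rightarrow> 'a \<Rightarrow> 'a set" where
  "SCC F a = {b. a \<in> args F \<and> b \<in> args F \<and> (a, b) \<in> (att F)\<^sup>* \<and> (b, a) \<in> (att F)\<^sup>*}"

definition D_set :: "'a AF \<Rightarrow> 'a set \<Rightarrow> 'a set \<Rightarrow> 'a set" where
  "D_set F S X = {b \<in> X. \<exists>a \<in> S - X. (a, b) \<in> att F}"

definition tf_step :: "'a AF \<Rightarrow> 'a set \<Rightarrow> 'a \<Rightarrow> 'a set \<Rightarrow> 'a set" where
  "tf_step F S a X = SCC (restrict_AF F (X - D_set F S X)) a"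

definition tf_limit :: "'a AF \<Rightarrow> 'a \<Rightarrow> 'a set set \<Rightarrow> 'a set" where
  "tf_limit F a K = SCC (restrict_AF F (\<Inter>K)) a"

text \<open>The class of all stages C^alpha_S(a), alpha ranging over all ordinals,
  as the least family closed under the transfinite recursion.\<close>
inductive_set tf_stages :: "'a AF \<Rightarrow> 'a set \<Rightarrow> 'a \<Rightarrow> 'a set set"
  for F :: "'a AF" and S :: "'a set" and a :: 'a where
  base: "SCC F a \<in> tf_stages F S a"
| succ: "X \<in> tf_stages F S a \<Longrightarrow> tf_step F S a X \<in> tf_stages F S a"
| lim: "\<forall>X\<in>K. X \<in> tf_stages F S a \<Longrightarrow> K \<noteq> {} \<Longrightarrow> tf_limit F a K \<in> tf_stages F S a"

text \<open>X is C^{alpha_S(a)}_S(a): the first stage (largest, as stages decrease) at which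
  a has dropped out or the sequence became stationary.\<close>
definition tf_final :: "'a AF \<Rightarrow> 'a set \<Rightarrow> 'a \<Rightarrow> 'a set \<Rightarrow> bool" where
  "tf_final F S a X \<longleftrightarrow> X \<in> tf_stages F S a \<and> (a \<notin> X \<or> tf_step F S a X = X) \<and>
     (\<forall>Y \<in> tf_stages F S a. (a \<notin> Y \<or> tf_step F S a Y = Y) \<longrightarrow> Y \<subseteq> X)"

definition tfcf2 :: "'a AF \<Rightarrow> 'a set \<Rightarrow> bool" where
  "tfcf2 F S \<longleftrightarrow> conflict_free F S \<and>
     (\<forall>a \<in> args F. \<forall>X. tf_final F S a X \<longrightarrow>
        a \<notin> X \<or> naive (restrict_AF F X) (S \<inter> X))"

definition reach_mod :: "'a AF \<Rightarrow> 'a set \<Rightarrow> 'a \<Rightarrow> 'a \<Rightarrow> bool" where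
  "reach_mod F B a b \<longleftrightarrow> a \<in> args (restrict_AF F B) \<and> b \<in> args (restrict_AF F B) \<and>
     (a, b) \<in> (att (restrict_AF F B))\<^sup>*"

definition Delta_op :: "'a AF \<Rightarrow> 'a set \<Rightarrow> 'a set \<Rightarrow> 'a set" where
  "Delta_op F S D = {a \<in> args F. \<exists>b \<in> S. (b, a) \<in> att F \<and> \<not> reach_mod F (args F - D) a b}"

definition Delta :: "'a AF \<Rightarrow> 'a set \<Rightarrow> 'a set" where
  "Delta F S = lfp (Delta_op F S)"

definition separation :: "'a AF \<Rightarrow> 'a AF" where
  "separation G = (args G, {(x, y) \<in> att G. y \<in> SCC G x})"

end

theory Submission
  imports Defs
begin

(* The iteration C^alpha_S(a) only removes arguments attacked by S from outside the current set,
   so a strongly connected set around a that S does not attack from outside survives every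
   stage, and the final stage, if it still contains a, is such a set; hence it is the largest
   one.  The least fixed point Delta removes exactly the arguments that lie in no such set, and
   in F minus Delta every SCC is itself unattacked.  So the final stage of a is the SCC of a in
   F minus Delta, and tfcf2 asks S to be naive inside each of these SCCs, which is naivety in
   the separation. *)

lemma args_restrict_AF [simp]: "args (restrict_AF F B) = args F \<inter> B"
  by (simp add: restrict_AF_def args_def)

lemma att_restrict_AF [simp]: "att (restrict_AF F B) = Restr (att F) B"
  by (simp add: restrict_AF_def att_def)

lemma args_separation [simp]: "args (separation G) = args G"
  by (simp add: separation_def args_def)

lemma att_separation [simp]: "att (separation G) = {(x, y) \<in> att G. y \<in> SCC G x}"
  by (simp add: separation_def att_def)

lemma restrict_AF_UNIV: "restrict_AF F UNIV = F"
  by (cases F) (simp add: restrict_AF_def args_def att_def)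

lemma restrict_AF_restrict_AF: "restrict_AF (restrict_AF F B) C = restrict_AF F (B \<inter> C)"
  by (auto simp: restrict_AF_def args_def att_def)

lemma wf_AF_restrict_AF: "wf_AF F \<Longrightarrow> wf_AF (restrict_AF F B)"
  by (auto simp: wf_AF_def)

definition strongly_connected :: "('a \<times> 'a) set \<Rightarrow> 'a set \<Rightarrow> bool" where
  "strongly_connected E X \<longleftrightarrow> (\<forall>x\<in>X. \<forall>y\<in>X. (x, y) \<in> (Restr E X)\<^sup>*)"

lemma SCC_subset_args: "SCC H a \<subseteq> args H"
  by (auto simp: SCC_def)

lemma SCC_restrict_AF_subset: "SCC (restrict_AF F B) a \<subseteq> B"
  by (auto simp: SCC_def)

lemma self_in_SCC_iff: "a \<in> SCC H a \<longleftrightarrow> a \<in> args H"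
  by (simp add: SCC_def)

lemma SCC_empty_if_not_self: "a \<notin> SCC H a \<Longrightarrow> SCC H a = {}"
  by (auto simp: SCC_def)

lemma SCC_eq_if_mem: "b \<in> SCC H a \<Longrightarrow> SCC H b = SCC H a"
  unfolding SCC_def by (auto intro: rtrancl_trans)

lemma rtrancl_within_SCC:
  assumes wf: "wf_AF H" and path: "(x, y) \<in> (att H)\<^sup>*"
    and "x \<in> SCC H a" "y \<in> SCC H a"
  shows "(x, y) \<in> (Restr (att H) (SCC H a))\<^sup>*"
  using path \<open>y \<in> SCC H a\<close>
proof (induction rule: rtrancl_induct)
  case base
  then show ?case by simp
next
  case (step y z)
  have "(a, x) \<in> (att H)\<^sup>*" "(z, a) \<in> (att H)\<^sup>*"
    using \<open>x \<in> SCC H a\<close> \<open>z \<in> SCC H a\<close> by (simp_all add: SCC_def)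
  then have "(a, y) \<in> (att H)\<^sup>*" "(y, a) \<in> (att H)\<^sup>*"
    using step.hyps by (auto dest: rtrancl_trans converse_rtrancl_into_rtrancl)
  moreover have "y \<in> args H" using wf step.hyps(2) by (auto simp: wf_AF_def)
  ultimately have "y \<in> SCC H a" using \<open>z \<in> SCC H a\<close> by (simp add: SCC_def)
  then have "(y, z) \<in> Restr (att H) (SCC H a)" using step by blast
  with step.IH[OF \<open>y \<in> SCC H a\<close>] show ?case ..
qed

lemma strongly_connected_SCC:
  assumes "wf_AF H"
  shows "strongly_connected (att H) (SCC H a)"
  unfolding strongly_connected_def
proof (intro ballI)
  fix x y assume "x \<in> SCC H a" "y \<in> SCC H a"
  then have "(x, a) \<in> (att H)\<^sup>*" "(a, y) \<in> (att H)\<^sup>*" by (simp_all add: SCC_def)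
  then have "(x, y) \<in> (att H)\<^sup>*" by (rule rtrancl_trans)
  then show "(x, y) \<in> (Restr (att H) (SCC H a))\<^sup>*"
    using rtrancl_within_SCC[OF assms] \<open>x \<in> SCC H a\<close> \<open>y \<in> SCC H a\<close> by blast
qed

lemma strongly_connected_Restr:
  "X \<subseteq> B \<Longrightarrow> strongly_connected (Restr E B) X \<longleftrightarrow> strongly_connected E X"
proof -
  assume "X \<subseteq> B"
  then have "Restr (Restr E B) X = Restr E X" by blast
  then show ?thesis by (simp add: strongly_connected_def)
qed

lemma strongly_connected_SCC_restrict_AF:
  assumes "wf_AF F"
  shows "strongly_connected (att F) (SCC (restrict_AF F B) a)"
proof -
  have "strongly_connected (att (restrict_AF F B)) (SCC (restrict_AF F B) a)"
    using strongly_connected_SCC[OF wf_AF_restrict_AF[OF assms]] .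
  then show ?thesis
    using strongly_connected_Restr[OF SCC_restrict_AF_subset[of F B a]] by simp
qed

lemma strongly_connected_subset_SCC:
  assumes "X \<subseteq> args F \<inter> B" "strongly_connected (att F) X" "a \<in> X"
  shows "X \<subseteq> SCC (restrict_AF F B) a"
proof
  fix y assume "y \<in> X"
  have "Restr (att F) X \<subseteq> Restr (att F) B" using assms(1) by blast
  moreover have "(a, y) \<in> (Restr (att F) X)\<^sup>*" "(y, a) \<in> (Restr (att F) X)\<^sup>*"
    using assms(2,3) \<open>y \<in> X\<close> unfolding strongly_connected_def by blast+
  ultimately have "(a, y) \<in> (Restr (att F) B)\<^sup>*" "(y, a) \<in> (Restr (att F) B)\<^sup>*"
    using rtrancl_mono by blast+
  with assms(1,3) \<open>y \<in> X\<close> show "y \<in> SCC (restrict_AF F B) a"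
    by (auto simp: SCC_def)
qed

definition unattacked_sc :: "'a AF \<Rightarrow> 'a set \<Rightarrow> 'a set \<Rightarrow> bool" where
  "unattacked_sc F S X \<longleftrightarrow> X \<subseteq> args F \<and> strongly_connected (att F) X \<and> D_set F S X = {}"

lemma tf_stage_eq_SCC:
  "Y \<in> tf_stages F S a \<Longrightarrow> \<exists>B. Y = SCC (restrict_AF F B) a"
proof (induction rule: tf_stages.induct)
  case base
  show ?case using restrict_AF_UNIV by metis
next
  case (succ X)
  show ?case unfolding tf_step_def by blast
next
  case (lim K)
  show ?case unfolding tf_limit_def by blast
qed

lemma unattacked_sc_subset_tf_stage:
  assumes X: "unattacked_sc F S X" "a \<in> X" and Y: "Y \<in> tf_stages F S a"
  shows "X \<subseteq> Y"
proof -
  have sc: "X \<subseteq> args F" "strongly_connected (att F) X" and unattacked: "D_set F S X = {}"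
    using X(1) by (simp_all add: unattacked_sc_def)
  show ?thesis
    using Y
  proof (induction rule: tf_stages.induct)
    case base
    show ?case
      using strongly_connected_subset_SCC[of X F UNIV] sc X(2) by (simp add: restrict_AF_UNIV)
  next
    case (succ Y)
    then have "X \<subseteq> Y - D_set F S Y"
      using unattacked unfolding D_set_def by blast
    then show ?case
      unfolding tf_step_def using strongly_connected_subset_SCC sc X(2) by (metis le_inf_iff)
  next
    case (lim K)
    then have "X \<subseteq> \<Inter>K" by blast
    then show ?case
      unfolding tf_limit_def using strongly_connected_subset_SCC sc X(2) by (metis le_inf_iff)
  qed
qed

lemma unattacked_sc_if_tf_step_fixed:
  assumes wf: "wf_AF F" and Y: "Y \<in> tf_stages F S a" and fixed: "tf_step F S a Y = Y"
  shows "unattacked_sc F S Y"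
proof -
  obtain B where B: "Y = SCC (restrict_AF F B) a" using tf_stage_eq_SCC[OF Y] by blast
  have "strongly_connected (att F) Y"
    using B strongly_connected_SCC_restrict_AF[OF wf] by simp
  moreover have "Y \<subseteq> args F" using B SCC_subset_args[of "restrict_AF F B" a] by simp
  moreover have "Y \<subseteq> Y - D_set F S Y"
    using fixed SCC_restrict_AF_subset[of F "Y - D_set F S Y" a] unfolding tf_step_def by argo
  then have "D_set F S Y = {}" unfolding D_set_def by blast
  ultimately show ?thesis by (simp add: unattacked_sc_def)
qed

text \<open>The limit over all stages is a stage, and it is already stationary.\<close>

lemma tf_final_exists:
  assumes wf: "wf_AF F"
  shows "\<exists>X. tf_final F S a X"
proof -
  let ?K = "tf_stages F S a"
  let ?Z = "tf_limit F a ?K"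
  have "?K \<noteq> {}" using tf_stages.base[of F a S] by blast
  then have Z: "?Z \<in> ?K" by (simp add: tf_stages.lim)
  have Z_sub: "?Z \<subseteq> \<Inter>?K"
    unfolding tf_limit_def by (rule SCC_restrict_AF_subset)
  have "tf_step F S a ?Z \<subseteq> ?Z"
    unfolding tf_step_def using SCC_restrict_AF_subset[of F "?Z - D_set F S ?Z" a] by blast
  moreover have "?Z \<subseteq> tf_step F S a ?Z"
    using Z_sub tf_stages.succ[OF Z] by blast
  ultimately have fixed: "tf_step F S a ?Z = ?Z" by blast
  have "\<forall>Y\<in>?K. a \<notin> Y \<or> tf_step F S a Y = Y \<longrightarrow> Y \<subseteq> ?Z"
  proof (intro ballI impI)
    fix Y assume Y: "Y \<in> ?K" and stop: "a \<notin> Y \<or> tf_step F S a Y = Y"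
    show "Y \<subseteq> ?Z"
    proof (cases "a \<in> Y")
      case False
      obtain B where "Y = SCC (restrict_AF F B) a" using tf_stage_eq_SCC[OF Y] by blast
      with False have "Y = {}" using SCC_empty_if_not_self by metis
      then show ?thesis by simp
    next
      case True
      with stop have "tf_step F S a Y = Y" by simp
      then have "unattacked_sc F S Y" by (rule unattacked_sc_if_tf_step_fixed[OF wf Y])
      then show ?thesis using True Z by (rule unattacked_sc_subset_tf_stage)
    qed
  qed
  then have "tf_final F S a ?Z" unfolding tf_final_def by (intro conjI disjI2 Z fixed)
  then show ?thesis ..
qed

lemma tf_final_unique: "tf_final F S a X \<Longrightarrow> tf_final F S a Y \<Longrightarrow> X = Y"
  unfolding tf_final_def by (meson subset_antisym)

lemma mono_Delta_op: "mono (Delta_op F S)"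
proof (rule monoI)
  fix D D' :: "'a set" assume "D \<subseteq> D'"
  then have sub: "Restr (att F) (args F - D') \<subseteq> Restr (att F) (args F - D)" by blast
  have "reach_mod F (args F - D) x b" if "reach_mod F (args F - D') x b" for x b
    using that \<open>D \<subseteq> D'\<close> subsetD[OF rtrancl_mono[OF sub]] unfolding reach_mod_def by auto
  then show "Delta_op F S D \<subseteq> Delta_op F S D'"
    unfolding Delta_op_def by blast
qed

lemma Delta_unfold: "Delta F S = Delta_op F S (Delta F S)"
  unfolding Delta_def using lfp_unfold[OF mono_Delta_op] .

lemma conflict_free_disjoint_Delta:
  assumes "conflict_free F S"
  shows "S \<inter> Delta F S = {}"
proof -
  have "\<forall>x \<in> Delta F S. \<exists>b\<in>S. (b, x) \<in> att F"
    by (subst Delta_unfold) (auto simp: Delta_op_def)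
  with assms show ?thesis unfolding conflict_free_def by blast
qed

text \<open>The complement of the union of all unattacked strongly connected sets is a pre-fixed point
  of the Delta operator.\<close>

lemma unattacked_sc_disjoint_Delta:
  assumes "unattacked_sc F S X"
  shows "X \<inter> Delta F S = {}"
proof -
  define D where "D = args F - \<Union>{X. unattacked_sc F S X}"
  have "Delta_op F S D \<subseteq> D"
  proof
    fix x assume "x \<in> Delta_op F S D"
    then obtain b where x: "x \<in> args F" and b: "b \<in> S" "(b, x) \<in> att F"
      and no_path: "\<not> reach_mod F (args F - D) x b"
      unfolding Delta_op_def by blast
    show "x \<in> D"
    proof (rule ccontr)
      assume "x \<notin> D"
      then obtain Y where Y: "unattacked_sc F S Y" "x \<in> Y" using x unfolding D_def by blast
      then have "b \<in> Y" using b unfolding unattacked_sc_def D_set_def by blast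
      have YD: "Y \<subseteq> args F - D" using Y unfolding D_def unattacked_sc_def by blast
      have "(x, b) \<in> (Restr (att F) Y)\<^sup>*"
        using Y \<open>b \<in> Y\<close> unfolding unattacked_sc_def strongly_connected_def by blast
      moreover have "Restr (att F) Y \<subseteq> Restr (att F) (args F - D)" using YD by blast
      ultimately have "(x, b) \<in> (Restr (att F) (args F - D))\<^sup>*"
        using rtrancl_mono by blast
      then have "reach_mod F (args F - D) x b"
        using YD \<open>x \<in> Y\<close> \<open>b \<in> Y\<close> unfolding reach_mod_def by auto
      with no_path show False ..
    qed
  qed
  then have "Delta F S \<subseteq> D" unfolding Delta_def by (rule lfp_lowerbound)
  with assms show ?thesis unfolding D_def by blast
qed

lemma unattacked_sc_SCC_minus_Delta:
  assumes wf: "wf_AF F"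
  shows "unattacked_sc F S (SCC (restrict_AF F (args F - Delta F S)) a)"
proof -
  define G where "G = restrict_AF F (args F - Delta F S)"
  have "D_set F S (SCC G a) = {}"
  proof (rule ccontr)
    assume "D_set F S (SCC G a) \<noteq> {}"
    then obtain y c where y: "y \<in> SCC G a" and c: "c \<in> S" "c \<notin> SCC G a" "(c, y) \<in> att F"
      unfolding D_set_def by blast
    have "y \<in> args G" using y SCC_subset_args[of G a] by blast
    then have "y \<notin> Delta_op F S (Delta F S)" using Delta_unfold[of F S] by (simp add: G_def)
    then have "reach_mod F (args F - Delta F S) y c"
      using \<open>y \<in> args G\<close> c unfolding Delta_op_def G_def by simp
    then have "c \<in> args G" "(y, c) \<in> (att G)\<^sup>*" unfolding reach_mod_def G_def by simp_all
    moreover have "(c, y) \<in> att G" using c \<open>c \<in> args G\<close> \<open>y \<in> args G\<close> by (simp add: G_def)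
    ultimately have "c \<in> SCC G y"
      using \<open>y \<in> args G\<close> by (simp add: SCC_def r_into_rtrancl)
    then have "c \<in> SCC G a" using SCC_eq_if_mem[OF y] by simp
    with c show False by simp
  qed
  moreover have "strongly_connected (att F) (SCC G a)"
    unfolding G_def by (rule strongly_connected_SCC_restrict_AF[OF wf])
  ultimately show ?thesis
    using SCC_subset_args[of G a] by (auto simp: unattacked_sc_def G_def)
qed

lemma tf_final_iff:
  assumes wf: "wf_AF F"
  shows "tf_final F S a X \<longleftrightarrow> X = SCC (restrict_AF F (args F - Delta F S)) a"
proof -
  let ?C = "SCC (restrict_AF F (args F - Delta F S)) a"
  obtain Z where Z: "tf_final F S a Z" using tf_final_exists[OF wf] by blast
  then have stage: "Z \<in> tf_stages F S a" and stop: "a \<notin> Z \<or> tf_step F S a Z = Z"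
    unfolding tf_final_def by simp_all
  have C_unattacked: "unattacked_sc F S ?C" by (rule unattacked_sc_SCC_minus_Delta[OF wf])
  have "Z = ?C"
  proof (cases "a \<in> Z")
    case True
    with stop have "tf_step F S a Z = Z" by simp
    then have Z_unattacked: "unattacked_sc F S Z"
      by (rule unattacked_sc_if_tf_step_fixed[OF wf stage])
    then have "Z \<subseteq> args F \<inter> (args F - Delta F S)"
      using unattacked_sc_disjoint_Delta[OF Z_unattacked] unfolding unattacked_sc_def by blast
    then have Z_sub: "Z \<subseteq> ?C"
      using Z_unattacked True strongly_connected_subset_SCC[of Z F "args F - Delta F S" a]
      unfolding unattacked_sc_def by blast
    with True have "a \<in> ?C" by blast
    then have "?C \<subseteq> Z" by (rule unattacked_sc_subset_tf_stage[OF C_unattacked _ stage])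
    with Z_sub show ?thesis by (rule subset_antisym)
  next
    case False
    have "a \<notin> ?C"
      using False unattacked_sc_subset_tf_stage[OF C_unattacked _ stage] by blast
    then have "?C = {}" by (rule SCC_empty_if_not_self)
    moreover obtain B where "Z = SCC (restrict_AF F B) a" using tf_stage_eq_SCC[OF stage] by blast
    with False have "Z = {}" using SCC_empty_if_not_self by metis
    ultimately show ?thesis by simp
  qed
  show ?thesis
  proof
    assume "tf_final F S a X"
    then have "Z = X" by (rule tf_final_unique[OF Z])
    with \<open>Z = ?C\<close> show "X = ?C" by simp
  next
    assume "X = ?C"
    with \<open>Z = ?C\<close> Z show "tf_final F S a X" by simp
  qed
qed

lemma att_separation_within_SCC:
  assumes "x \<in> SCC G a" "y \<in> SCC G a"
  shows "(x, y) \<in> att (separation G) \<longleftrightarrow> (x, y) \<in> att G"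
  using assms SCC_eq_if_mem[OF assms(1)] by simp

lemma conflict_free_separation_iff:
  "conflict_free (separation G) T \<longleftrightarrow>
    T \<subseteq> args G \<and> (\<forall>a\<in>args G. conflict_free (restrict_AF G (SCC G a)) (T \<inter> SCC G a))"
proof
  assume cf: "conflict_free (separation G) T"
  have pieces: "conflict_free (restrict_AF G (SCC G a)) (T \<inter> SCC G a)" for a
  proof -
    have "(x, y) \<notin> att G" if "x \<in> T \<inter> SCC G a" "y \<in> T \<inter> SCC G a" for x y
      using cf that att_separation_within_SCC[of x G a y] unfolding conflict_free_def by blast
    then show ?thesis using cf unfolding conflict_free_def by auto
  qed
  moreover have "T \<subseteq> args G" using cf by (simp add: conflict_free_def)
  ultimately show "T \<subseteq> args G \<and> (\<forall>a\<in>args G. conflict_free (restrict_AF G (SCC G a)) (T \<inter> SCC G a))"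
    by blast
next
  assume cf_parts: "T \<subseteq> args G \<and> (\<forall>a\<in>args G. conflict_free (restrict_AF G (SCC G a)) (T \<inter> SCC G a))"
  have "(x, y) \<notin> att (separation G)" if "x \<in> T" "y \<in> T" for x y
  proof
    assume "(x, y) \<in> att (separation G)"
    then have att: "(x, y) \<in> att G" and y: "y \<in> SCC G x" by simp_all
    have "x \<in> args G" using cf_parts \<open>x \<in> T\<close> by blast
    then have x: "x \<in> SCC G x" by (simp add: self_in_SCC_iff)
    have "conflict_free (restrict_AF G (SCC G x)) (T \<inter> SCC G x)"
      using cf_parts \<open>x \<in> args G\<close> by blast
    then have "(x, y) \<notin> Restr (att G) (SCC G x)"
      using that x y unfolding conflict_free_def by simp
    with att x y show False by simp
  qed
  with cf_parts show "conflict_free (separation G) T" unfolding conflict_free_def by simp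
qed

lemma naive_maximal: "naive F S \<Longrightarrow> conflict_free F T \<Longrightarrow> S \<subseteq> T \<Longrightarrow> T = S"
  unfolding naive_def by blast

lemma naive_separation_iff:
  assumes "S \<subseteq> args G"
  shows "naive (separation G) S \<longleftrightarrow>
    (\<forall>a\<in>args G. naive (restrict_AF G (SCC G a)) (S \<inter> SCC G a))"
proof
  assume naive_S: "naive (separation G) S"
  then have cf_S: "\<forall>b\<in>args G. conflict_free (restrict_AF G (SCC G b)) (S \<inter> SCC G b)"
    by (simp add: naive_def conflict_free_separation_iff)
  show "\<forall>a\<in>args G. naive (restrict_AF G (SCC G a)) (S \<inter> SCC G a)"
  proof
    fix a assume "a \<in> args G"
    let ?C = "SCC G a"
    have "T = S \<inter> ?C"
      if T: "conflict_free (restrict_AF G ?C) T" "S \<inter> ?C \<subseteq> T" for T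
    proof -
      \<comment> \<open>The separation has no attacks between SCCs, so S may be enlarged inside ?C alone.\<close>
      have "T \<subseteq> ?C" using T(1) by (auto simp: conflict_free_def)
      have "conflict_free (restrict_AF G (SCC G b)) ((S - ?C \<union> T) \<inter> SCC G b)"
        if b: "b \<in> args G" for b
      proof (cases "b \<in> ?C")
        case True
        have "SCC G b = ?C" by (rule SCC_eq_if_mem[OF True])
        moreover have "(S - ?C \<union> T) \<inter> ?C = T" using \<open>T \<subseteq> ?C\<close> by blast
        ultimately show ?thesis using T(1) by (simp only:)
      next
        case False
        have "z \<notin> SCC G b" if "z \<in> ?C" for z
          using False b that SCC_eq_if_mem self_in_SCC_iff by metis
        then have "(S - ?C \<union> T) \<inter> SCC G b = S \<inter> SCC G b" using \<open>T \<subseteq> ?C\<close> by blast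
        then show ?thesis using cf_S b by simp
      qed
      moreover have "S - ?C \<union> T \<subseteq> args G"
        using assms \<open>T \<subseteq> ?C\<close> SCC_subset_args[of G a] by blast
      ultimately have "conflict_free (separation G) (S - ?C \<union> T)"
        by (simp add: conflict_free_separation_iff)
      then have "S - ?C \<union> T = S" by (rule naive_maximal[OF naive_S]) (use T(2) in blast)
      then show ?thesis using T(2) \<open>T \<subseteq> ?C\<close> by blast
    qed
    moreover have "conflict_free (restrict_AF G ?C) (S \<inter> ?C)"
      using cf_S \<open>a \<in> args G\<close> by blast
    ultimately show "naive (restrict_AF G ?C) (S \<inter> ?C)"
      unfolding naive_def by blast
  qed
next
  assume naive_parts: "\<forall>a\<in>args G. naive (restrict_AF G (SCC G a)) (S \<inter> SCC G a)"
  have "x \<in> S" if T: "conflict_free (separation G) T" "S \<subseteq> T" and "x \<in> T" for T x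
  proof -
    have "x \<in> args G" using T(1) \<open>x \<in> T\<close> by (auto simp: conflict_free_def)
    then have "naive (restrict_AF G (SCC G x)) (S \<inter> SCC G x)" using naive_parts by blast
    moreover have "conflict_free (restrict_AF G (SCC G x)) (T \<inter> SCC G x)"
      using T(1) \<open>x \<in> args G\<close> by (simp add: conflict_free_separation_iff)
    ultimately have "T \<inter> SCC G x = S \<inter> SCC G x"
      by (rule naive_maximal) (use T(2) in blast)
    moreover have "x \<in> T \<inter> SCC G x" using \<open>x \<in> T\<close> \<open>x \<in> args G\<close> by (simp add: self_in_SCC_iff)
    ultimately show ?thesis by simp
  qed
  moreover have "conflict_free (separation G) S"
    using assms naive_parts by (simp add: naive_def conflict_free_separation_iff)
  ultimately show "naive (separation G) S" unfolding naive_def by blast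
qed

theorem theorem8:
  fixes F :: "'a AF" and S :: "'a set"
  assumes "wf_AF F" and "S \<subseteq> args F"
  shows "tfcf2 F S \<longleftrightarrow>
    conflict_free F S \<and> naive (separation (restrict_AF F (args F - Delta F S))) S"
proof -
  define G where "G = restrict_AF F (args F - Delta F S)"
  have args_G: "args G = args F - Delta F S" by (auto simp: G_def)
  have restrict_G: "restrict_AF F (SCC G a) = restrict_AF G (SCC G a)" for a
    using SCC_restrict_AF_subset[of F _ a] by (simp add: G_def restrict_AF_restrict_AF Int_absorb1)
  have "tfcf2 F S \<longleftrightarrow> conflict_free F S \<and>
      (\<forall>a\<in>args F. a \<notin> SCC G a \<or> naive (restrict_AF F (SCC G a)) (S \<inter> SCC G a))"
    using assms(1) by (simp add: tfcf2_def tf_final_iff G_def)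
  also have "\<dots> \<longleftrightarrow> conflict_free F S \<and>
      (\<forall>a\<in>args G. naive (restrict_AF G (SCC G a)) (S \<inter> SCC G a))"
    by (auto simp: self_in_SCC_iff restrict_G args_G)
  also have "\<dots> \<longleftrightarrow> conflict_free F S \<and> naive (separation G) S"
  proof -
    have "conflict_free F S \<Longrightarrow> S \<subseteq> args G"
      using assms(2) conflict_free_disjoint_Delta[of F S] args_G by blast
    then show ?thesis using naive_separation_iff[of S G] by blast
  qed
  finally show ?thesis unfolding G_def .
qed

end
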